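(* Let $f,g$ be slice monogenic functions on $\mathbb{R}^{n+1}$ that commute with respect to the $*$-product, i.e. $f*g=g*f$. Then $$\exp_*(f+g)=\exp_*(f)*\exp_*(g).$$
   Context: $\mathbb{R}_n$ is the real Clifford algebra generated by $e_1,\dots,e_n$ with $e_ie_j+e_je_i=-2\delta_{ij}$; paravectors $x=x_0+\sum x_ie_i$ are identified with $\mathbb{R}^{n+1}$. $\mathbb{S}^{n-1}$ is the set of unit vectors $\omega=\sum a_ie_i$ ($\omega^2=-1$). A function $f$ on an axially symmetric open set is slice monogenic if $f(u+\omega v)=\alpha(u,v)+\omega\beta(u,v)$ for all $\omega\in\mathbb{S}^{n-1}$ with $\mathbb{R}_n$-valued differentiable $\alpha,\beta$, $\alpha$ even and $\beta$ odd in $v$, satisfying $\partial_u\alpha=\partial_v\beta$, $\partial_u\beta=-\partial_v\alpha$. For $f=\alpha+\omega\beta$, $g=\gamma+\omega\delta$, the $*$-product is $(f*g)(u+\omega v)=(\alpha\gamma-\beta\delta)+\omega(\beta\gamma+\alpha\delta)$. The $*$-exponential of a slice monogenic $f$ is $\exp_*(f)=\sum_{k\ge0}\frac{1}{k!}f^{*k}$. *)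

theory Defs
  imports "HOL-Analysis.Analysis"
begin

text \<open>Elements of the real Clifford algebra R_n are represented as coefficient
functions on index sets: x = sum over A subset of {1..n} of x A e_A.
Only coefficients at subsets of {1..n} are meaningful for elements of R_n.\<close>

type_synonym cl = "nat set \<Rightarrow> real"

definition cl_add :: "cl \<Rightarrow> cl \<Rightarrow> cl" where
  "cl_add x y = (\<lambda>C. x C + y C)"

definition cl_scale :: "real \<Rightarrow> cl \<Rightarrow> cl" where
  "cl_scale r x = (\<lambda>C. r * x C)"

definition cl_real :: "real \<Rightarrow> cl" where
  "cl_real r = (\<lambda>C. if C = {} then r else 0)"

text \<open>Sign in e_A e_B = sign(A,B) e_(A symmetric-difference B), for the relations
e_i e_j + e_j e_i = -2 delta_ij.\<close>
definition cl_sign :: "nat set \<Rightarrow> nat set \<Rightarrow> real" where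
  "cl_sign A B = (-1) ^ (card {(a, b). a \<in> A \<and> b \<in> B \<and> b < a} + card (A \<inter> B))"

definition cl_mult :: "nat \<Rightarrow> cl \<Rightarrow> cl \<Rightarrow> cl" where
  "cl_mult n x y = (\<lambda>C. \<Sum>A\<in>Pow {1..n}. \<Sum>B\<in>Pow {1..n}.
      if (A - B) \<union> (B - A) = C then cl_sign A B * x A * y B else 0)"

definition cl_sphere :: "nat \<Rightarrow> cl set" where
  "cl_sphere n = {w. (\<forall>C. w C \<noteq> 0 \<longrightarrow> (\<exists>i\<in>{1..n}. C = {i}))
                     \<and> (\<Sum>i=1..n. (w {i})^2) = 1}"

text \<open>Paravectors x_0 + sum x_i e_i, identified with R^(n+1).\<close>
definition paravectors :: "nat \<Rightarrow> cl set" where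
  "paravectors n = {x. \<forall>C. x C \<noteq> 0 \<longrightarrow> C = {} \<or> (\<exists>i\<in>{1..n}. C = {i})}"

definition slice_pt :: "real \<Rightarrow> cl \<Rightarrow> real \<Rightarrow> cl" where
  "slice_pt u w v = cl_add (cl_real u) (cl_scale v w)"

definition is_stem :: "nat \<Rightarrow> (real \<times> real \<Rightarrow> cl) \<Rightarrow> (real \<times> real \<Rightarrow> cl) \<Rightarrow> bool" where
  "is_stem n \<alpha> \<beta> \<longleftrightarrow>
     (\<forall>p C. \<not> C \<subseteq> {1..n} \<longrightarrow> \<alpha> p C = 0 \<and> \<beta> p C = 0) \<and>
     (\<forall>u v C. \<alpha> (u, -v) C = \<alpha> (u, v) C \<and> \<beta> (u, -v) C = - \<beta> (u, v) C) \<and>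
     (\<forall>p C. (\<lambda>q. \<alpha> q C) differentiable (at p) \<and> (\<lambda>q. \<beta> q C) differentiable (at p)) \<and>
     (\<forall>u v C. deriv (\<lambda>t. \<alpha> (t, v) C) u = deriv (\<lambda>s. \<beta> (u, s) C) v \<and>
              deriv (\<lambda>t. \<beta> (t, v) C) u = - deriv (\<lambda>s. \<alpha> (u, s) C) v)"

definition stems_of :: "nat \<Rightarrow> (cl \<Rightarrow> cl) \<Rightarrow> (real \<times> real \<Rightarrow> cl) \<Rightarrow> (real \<times> real \<Rightarrow> cl) \<Rightarrow> bool" where
  "stems_of n f \<alpha> \<beta> \<longleftrightarrow> is_stem n \<alpha> \<beta> \<and>
     (\<forall>w\<in>cl_sphere n. \<forall>u v. f (slice_pt u w v) = cl_add (\<alpha> (u, v)) (cl_mult n w (\<beta> (u, v))))"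

definition slice_monogenic :: "nat \<Rightarrow> (cl \<Rightarrow> cl) \<Rightarrow> bool" where
  "slice_monogenic n f \<longleftrightarrow> (\<exists>\<alpha> \<beta>. stems_of n f \<alpha> \<beta>)"

definition star :: "nat \<Rightarrow> (cl \<Rightarrow> cl) \<Rightarrow> (cl \<Rightarrow> cl) \<Rightarrow> cl \<Rightarrow> cl" where
  "star n f g = (\<lambda>x. SOME y. \<exists>u v w \<alpha> \<beta> \<gamma> \<delta>.
      w \<in> cl_sphere n \<and> x = slice_pt u w v \<and> stems_of n f \<alpha> \<beta> \<and> stems_of n g \<gamma> \<delta> \<and>
      y = cl_add (cl_add (cl_mult n (\<alpha> (u, v)) (\<gamma> (u, v)))
                          (cl_scale (-1) (cl_mult n (\<beta> (u, v)) (\<delta> (u, v)))))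
                 (cl_mult n w (cl_add (cl_mult n (\<beta> (u, v)) (\<gamma> (u, v)))
                                      (cl_mult n (\<alpha> (u, v)) (\<delta> (u, v))))))"

primrec star_pow :: "nat \<Rightarrow> (cl \<Rightarrow> cl) \<Rightarrow> nat \<Rightarrow> cl \<Rightarrow> cl" where
  "star_pow n f 0 = (\<lambda>x. cl_real 1)"
| "star_pow n f (Suc k) = star n (star_pow n f k) f"

text \<open>exp_*(f) = sum_k f^{*k} / k!, the series converging coefficientwise
(equivalently in norm, R_n being finite dimensional).\<close>
definition star_exp :: "nat \<Rightarrow> (cl \<Rightarrow> cl) \<Rightarrow> cl \<Rightarrow> cl" where
  "star_exp n f = (\<lambda>x C. \<Sum>k. star_pow n f k x C / fact k)"

end

(*
  The stems (alpha, beta) of a slice monogenic function f are packed into the single function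
  F(u + iv) = alpha(u, v) + i beta(u, v) with values in the complexified algebra R_n (x) C.
  The Cauchy-Riemann system says exactly that F is holomorphic, and the parity of the stems says
  F(conj z) = conj (F z). In this picture the *-product is the pointwise product F(z) G(z) in
  R_n (x) C, hence *-powers and exp_* are the pointwise powers and the pointwise exponential series.
  Stems are unique (compare the values at u + e_1 v and u - e_1 v and use e_1^2 = -1), so
  f*g = g*f forces F(z) G(z) = G(z) F(z) for every z, and the theorem reduces to the law
  exp (a + b) = exp a exp b for commuting elements of the finite-dimensional algebra R_n (x) C,
  which follows from the binomial formula and the Cauchy product of absolutely convergent series.
*)

theory Submission
  imports Defs "HOL-Complex_Analysis.Cauchy_Integral_Formula"
begin

section \<open>Signs of the Clifford product\<close>

lemma card_sym_diff:
  assumes "finite A" "finite B"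
  shows "card A + card B = card (sym_diff A B) + 2 * card (A \<inter> B)"
proof -
  have "card (sym_diff A B) = card (A - B) + card (B - A)"
    using assms by (intro card_Un_disjoint) auto
  then show ?thesis
    using card_Int_Diff[OF assms(1), of B] card_Int_Diff[OF assms(2), of A] by (simp add: Int_commute)
qed

lemma minus_one_power_card_sym_diff:
  assumes "finite A" "finite B"
  shows "(-1::real) ^ card (sym_diff A B) = (-1) ^ card A * (-1) ^ card B"
proof -
  have "(-1::real) ^ card A * (-1) ^ card B = (-1) ^ (card (sym_diff A B) + 2 * card (A \<inter> B))"
    by (simp add: card_sym_diff[OF assms] flip: power_add)
  then show ?thesis by (simp add: power_add power_mult)
qed

lemma cl_sign_cocycle:
  assumes "finite A" "finite B" "finite E"
  shows "cl_sign A B * cl_sign (sym_diff A B) E = cl_sign A (sym_diff B E) * cl_sign B E"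
proof -
  define inversions where "inversions X Y = {(a, b). a \<in> X \<and> b \<in> Y \<and> b < a}" for X Y :: "nat set"
  have finite_inversions: "finite (inversions X Y)" if "finite X" "finite Y" for X Y
    unfolding inversions_def by (rule finite_subset[of _ "X \<times> Y"]) (use that in auto)
  have sign: "cl_sign X Y = (-1) ^ card (inversions X Y) * (-1) ^ card (X \<inter> Y)" for X Y
    unfolding cl_sign_def inversions_def by (simp add: power_add)
  have "inversions (sym_diff A B) E = sym_diff (inversions A E) (inversions B E)"
    "inversions A (sym_diff B E) = sym_diff (inversions A B) (inversions A E)"
    "sym_diff A B \<inter> E = sym_diff (A \<inter> E) (B \<inter> E)"
    "A \<inter> sym_diff B E = sym_diff (A \<inter> B) (A \<inter> E)"
    unfolding inversions_def by auto
  then show ?thesis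
    using assms by (simp add: sign minus_one_power_card_sym_diff finite_inversions)
qed

lemma abs_cl_sign [simp]: "\<bar>cl_sign A B\<bar> = 1"
  unfolding cl_sign_def by (simp add: power_abs)

lemma cl_sign_empty [simp]: "cl_sign {} B = 1" "cl_sign A {} = 1"
  unfolding cl_sign_def by simp_all

lemma sum_fibres_collapse:
  fixes k :: "'b \<Rightarrow> 'c \<Rightarrow> 'a::semiring_0"
  assumes "finite P" "finite S" "finite T" "\<And>A B. A \<in> S \<Longrightarrow> B \<in> T \<Longrightarrow> h A B \<in> P"
  shows "(\<Sum>D\<in>P. (\<Sum>A\<in>S. \<Sum>B\<in>T. if h A B = D then k A B else 0) * c D)
       = (\<Sum>A\<in>S. \<Sum>B\<in>T. k A B * c (h A B))"
proof -
  have "(\<Sum>D\<in>P. (\<Sum>A\<in>S. \<Sum>B\<in>T. if h A B = D then k A B else 0) * c D)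
      = (\<Sum>D\<in>P. \<Sum>A\<in>S. \<Sum>B\<in>T. if h A B = D then k A B * c D else 0)"
    by (auto simp: sum_distrib_right intro!: sum.cong)
  also have "\<dots> = (\<Sum>A\<in>S. \<Sum>B\<in>T. \<Sum>D\<in>P. if h A B = D then k A B * c D else 0)"
    by (simp add: sum.swap[of _ P])
  also have "\<dots> = (\<Sum>A\<in>S. \<Sum>B\<in>T. k A B * c (h A B))"
    using assms by simp
  finally show ?thesis .
qed

section \<open>The Clifford product with coefficients in a commutative real algebra\<close>

definition cl_supported :: "nat \<Rightarrow> (nat set \<Rightarrow> 'a::zero) \<Rightarrow> bool" where
  "cl_supported n x \<longleftrightarrow> (\<forall>C. \<not> C \<subseteq> {1..n} \<longrightarrow> x C = 0)"

text \<open>With real coefficients this is \<^const>\<open>cl_mult\<close>; with complex coefficients it is the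
  product of the complexification R_n (x) C, in which the stem pair of a slice function lives.\<close>

definition clifford_mult ::
    "nat \<Rightarrow> (nat set \<Rightarrow> 'a::{comm_ring_1, real_algebra_1}) \<Rightarrow> (nat set \<Rightarrow> 'a) \<Rightarrow> nat set \<Rightarrow> 'a" where
  "clifford_mult n x y = (\<lambda>C. \<Sum>A\<in>Pow {1..n}. \<Sum>B\<in>Pow {1..n}.
      if sym_diff A B = C then of_real (cl_sign A B) * x A * y B else 0)"

definition clifford_one :: "nat set \<Rightarrow> 'a::{zero, one}" where
  "clifford_one = (\<lambda>C. if C = {} then 1 else 0)"

lemma cl_mult_eq_clifford_mult: "cl_mult n = clifford_mult n"
  unfolding cl_mult_def clifford_mult_def by (simp cong: if_cong)

lemma cl_real_one: "cl_real 1 = clifford_one"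
  unfolding cl_real_def clifford_one_def ..

lemma cl_supported_clifford_mult: "cl_supported n (clifford_mult n x y)"
  unfolding cl_supported_def clifford_mult_def by (fastforce intro!: sum.neutral)

lemma cl_supported_clifford_one: "cl_supported n clifford_one"
  unfolding cl_supported_def clifford_one_def by auto

lemma clifford_mult_expand_left:
  "clifford_mult n (clifford_mult n x y) z C = (\<Sum>A\<in>Pow {1..n}. \<Sum>B\<in>Pow {1..n}. \<Sum>E\<in>Pow {1..n}.
     if sym_diff (sym_diff A B) E = C
     then of_real (cl_sign A B * cl_sign (sym_diff A B) E) * x A * y B * z E else 0)"
proof -
  let ?P = "Pow {1..n}"
  have "clifford_mult n (clifford_mult n x y) z C = (\<Sum>D\<in>?P. clifford_mult n x y D *
      (\<Sum>E\<in>?P. if sym_diff D E = C then of_real (cl_sign D E) * z E else 0))"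
    unfolding clifford_mult_def[of n "clifford_mult n x y"]
    by (auto simp: sum_distrib_left mult_ac intro!: sum.cong)
  also have "\<dots> = (\<Sum>A\<in>?P. \<Sum>B\<in>?P. of_real (cl_sign A B) * x A * y B *
      (\<Sum>E\<in>?P. if sym_diff (sym_diff A B) E = C then of_real (cl_sign (sym_diff A B) E) * z E else 0))"
    unfolding clifford_mult_def[of n x] by (rule sum_fibres_collapse) auto
  finally show ?thesis
    by (simp add: sum_distrib_left mult_ac if_distrib cong: if_cong)
qed

lemma clifford_mult_expand_right:
  "clifford_mult n x (clifford_mult n y z) C = (\<Sum>A\<in>Pow {1..n}. \<Sum>B\<in>Pow {1..n}. \<Sum>E\<in>Pow {1..n}.
     if sym_diff A (sym_diff B E) = C
     then of_real (cl_sign A (sym_diff B E) * cl_sign B E) * x A * y B * z E else 0)"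
proof -
  let ?P = "Pow {1..n}"
  have "clifford_mult n x (clifford_mult n y z) C = (\<Sum>A\<in>?P. \<Sum>D\<in>?P. clifford_mult n y z D *
      (if sym_diff A D = C then of_real (cl_sign A D) * x A else 0))"
    unfolding clifford_mult_def[of n x] by (auto simp: mult_ac intro!: sum.cong)
  also have "\<dots> = (\<Sum>A\<in>?P. \<Sum>B\<in>?P. \<Sum>E\<in>?P. of_real (cl_sign B E) * y B * z E *
      (if sym_diff A (sym_diff B E) = C then of_real (cl_sign A (sym_diff B E)) * x A else 0))"
    unfolding clifford_mult_def[of n y] by (intro sum.cong refl sum_fibres_collapse) auto
  finally show ?thesis
    by (simp add: mult_ac if_distrib cong: if_cong)
qed

lemma clifford_mult_assoc: "clifford_mult n (clifford_mult n x y) z = clifford_mult n x (clifford_mult n y z)"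
proof
  fix C
  have "cl_sign A B * cl_sign (sym_diff A B) E = cl_sign A (sym_diff B E) * cl_sign B E"
    if "A \<subseteq> {1..n}" "B \<subseteq> {1..n}" "E \<subseteq> {1..n}" for A B E
    using that by (intro cl_sign_cocycle) (auto intro: finite_subset)
  moreover have "sym_diff (sym_diff A B) E = sym_diff A (sym_diff B E)" for A B E :: "nat set"
    by blast
  ultimately show "clifford_mult n (clifford_mult n x y) z C = clifford_mult n x (clifford_mult n y z) C"
    unfolding clifford_mult_expand_left clifford_mult_expand_right by (intro sum.cong refl) auto
qed

lemma clifford_mult_one_left:
  assumes "cl_supported n x" shows "clifford_mult n clifford_one x = x"
proof
  fix C
  have "clifford_mult n clifford_one x C = (\<Sum>A\<in>Pow {1..n}.
      if A = {} then (\<Sum>B\<in>Pow {1..n}. if sym_diff A B = C then x B else 0) else 0)"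
    unfolding clifford_mult_def clifford_one_def by (intro sum.cong refl) (simp cong: if_cong)
  also have "\<dots> = (\<Sum>B\<in>Pow {1..n}. if B = C then x B else 0)"
    by simp
  also have "\<dots> = x C"
    using assms unfolding cl_supported_def by auto
  finally show "clifford_mult n clifford_one x C = x C" .
qed

lemma clifford_mult_one_right:
  assumes "cl_supported n x" shows "clifford_mult n x clifford_one = x"
proof
  fix C
  have "clifford_mult n x clifford_one C = (\<Sum>A\<in>Pow {1..n}. \<Sum>B\<in>Pow {1..n}.
      if B = {} then (if sym_diff A B = C then x A else 0) else 0)"
    unfolding clifford_mult_def clifford_one_def by (intro sum.cong refl) auto
  also have "\<dots> = (\<Sum>A\<in>Pow {1..n}. if A = C then x A else 0)"
    by simp
  also have "\<dots> = x C"
    using assms unfolding cl_supported_def by auto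
  finally show "clifford_mult n x clifford_one C = x C" .
qed

lemma if_sum_distrib: "(if P then \<Sum>i\<in>I. g i else 0) = (\<Sum>i\<in>I. if P then g i else 0)"
  by simp

lemma clifford_mult_sum_left:
  "clifford_mult n (\<lambda>C. \<Sum>i\<in>I. x i C) z = (\<lambda>D. \<Sum>i\<in>I. clifford_mult n (x i) z D)"
  unfolding clifford_mult_def
  by (simp add: sum_distrib_left sum_distrib_right if_sum_distrib sum.swap[of _ I] cong: if_cong)

lemma clifford_mult_sum_right:
  "clifford_mult n x (\<lambda>C. \<Sum>i\<in>I. z i C) = (\<lambda>D. \<Sum>i\<in>I. clifford_mult n x (z i) D)"
  unfolding clifford_mult_def
  by (simp add: sum_distrib_left sum_distrib_right if_sum_distrib sum.swap[of _ I] cong: if_cong)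

lemma clifford_mult_scale_left:
  "clifford_mult n (\<lambda>C. c * x C) z = (\<lambda>D. c * clifford_mult n x z D)"
  unfolding clifford_mult_def by (auto simp: fun_eq_iff sum_distrib_left mult_ac intro!: sum.cong)

lemma clifford_mult_scale_right:
  "clifford_mult n x (\<lambda>C. c * z C) = (\<lambda>D. c * clifford_mult n x z D)"
  unfolding clifford_mult_def by (auto simp: fun_eq_iff sum_distrib_left mult_ac intro!: sum.cong)

lemma clifford_mult_add_left:
  "clifford_mult n (\<lambda>C. x C + y C) z = (\<lambda>D. clifford_mult n x z D + clifford_mult n y z D)"
  using clifford_mult_sum_left[of n "\<lambda>b. if b then y else x" UNIV z] by (simp add: UNIV_bool)

lemma clifford_mult_add_right:
  "clifford_mult n x (\<lambda>C. y C + z C) = (\<lambda>D. clifford_mult n x y D + clifford_mult n x z D)"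
  using clifford_mult_sum_right[of n x "\<lambda>b. if b then z else y" UNIV] by (simp add: UNIV_bool)

lemma clifford_mult_zero_right: "clifford_mult n x (\<lambda>C. 0) = (\<lambda>D. 0)"
  unfolding clifford_mult_def by (simp cong: if_cong)

lemma clifford_mult_minus_left: "clifford_mult n (\<lambda>C. - x C) z = (\<lambda>D. - clifford_mult n x z D)"
  using clifford_mult_scale_left[of n "-1" x z] by simp

lemma clifford_mult_minus_right: "clifford_mult n x (\<lambda>C. - z C) = (\<lambda>D. - clifford_mult n x z D)"
  using clifford_mult_scale_right[of n x "-1" z] by simp

primrec clifford_pow :: "nat \<Rightarrow> (nat set \<Rightarrow> 'a::{comm_ring_1, real_algebra_1}) \<Rightarrow> nat \<Rightarrow> nat set \<Rightarrow> 'a" where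
  "clifford_pow n x 0 = clifford_one"
| "clifford_pow n x (Suc k) = clifford_mult n (clifford_pow n x k) x"

lemma cl_supported_clifford_pow: "cl_supported n (clifford_pow n x k)"
  by (cases k) (simp_all add: cl_supported_clifford_one cl_supported_clifford_mult)

lemma clifford_mult_pow_left:
  assumes "cl_supported n x"
  shows "clifford_mult n x (clifford_pow n x k) = clifford_pow n x (Suc k)"
proof (induction k)
  case 0
  then show ?case using assms by (simp add: clifford_mult_one_left clifford_mult_one_right)
next
  case (Suc k)
  then show ?case by (simp flip: clifford_mult_assoc)
qed

lemma clifford_pow_commute:
  assumes "cl_supported n y" "clifford_mult n x y = clifford_mult n y x"
  shows "clifford_mult n (clifford_pow n x k) y = clifford_mult n y (clifford_pow n x k)"
proof (induction k)
  case 0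
  then show ?case using assms by (simp add: clifford_mult_one_left clifford_mult_one_right)
next
  case (Suc k)
  have "clifford_mult n (clifford_pow n x (Suc k)) y = clifford_mult n (clifford_pow n x k) (clifford_mult n y x)"
    using assms(2) by (simp add: clifford_mult_assoc)
  also have "\<dots> = clifford_mult n y (clifford_pow n x (Suc k))"
    using Suc by (simp flip: clifford_mult_assoc)
  finally show ?case .
qed

section \<open>The exponential series\<close>

definition clifford_exp_term :: "nat \<Rightarrow> (nat set \<Rightarrow> 'a::real_normed_field) \<Rightarrow> nat \<Rightarrow> nat set \<Rightarrow> 'a" where
  "clifford_exp_term n x k = (\<lambda>C. clifford_pow n x k C / fact k)"

lemma cl_supported_clifford_exp_term: "cl_supported n (clifford_exp_term n x k)"
  using cl_supported_clifford_pow[of n x k] unfolding cl_supported_def clifford_exp_term_def by simp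

lemma clifford_exp_term_eq_scale: "clifford_exp_term n x k = (\<lambda>C. inverse (fact k) * clifford_pow n x k C)"
  unfolding clifford_exp_term_def by (simp add: field_simps)

lemma clifford_mult_exp_term_left:
  assumes "cl_supported n x"
  shows "clifford_mult n x (clifford_exp_term n x k) = (\<lambda>D. of_nat (Suc k) * clifford_exp_term n x (Suc k) D)"
  unfolding clifford_exp_term_eq_scale clifford_mult_scale_right clifford_mult_pow_left[OF assms]
  by (simp add: field_simps del: of_nat_Suc)

lemma clifford_exp_term_commute:
  assumes "cl_supported n y" "clifford_mult n x y = clifford_mult n y x"
  shows "clifford_mult n (clifford_exp_term n x k) y = clifford_mult n y (clifford_exp_term n x k)"
  unfolding clifford_exp_term_eq_scale clifford_mult_scale_left clifford_mult_scale_right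
    clifford_pow_commute[OF assms] ..

lemma cl_supported_add:
  fixes x y :: "nat set \<Rightarrow> 'a::monoid_add"
  shows "cl_supported n x \<Longrightarrow> cl_supported n y \<Longrightarrow> cl_supported n (\<lambda>C. x C + y C)"
  unfolding cl_supported_def by simp

lemma clifford_exp_term_add:
  assumes x: "cl_supported n x" and y: "cl_supported n y"
    and comm: "clifford_mult n x y = clifford_mult n y x"
  shows "clifford_exp_term n (\<lambda>C. x C + y C) m
    = (\<lambda>D. \<Sum>i\<le>m. clifford_mult n (clifford_exp_term n x i) (clifford_exp_term n y (m - i)) D)"
proof (induction m)
  case 0
  show ?case
    unfolding clifford_exp_term_def by (simp add: clifford_mult_one_left cl_supported_clifford_one)
next
  case (Suc m)
  let ?S = "clifford_exp_term n"
  let ?P = "\<lambda>i j. clifford_mult n (?S x i) (?S y j)"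
  have "of_nat (Suc m) * ?S (\<lambda>C. x C + y C) (Suc m) D
      = clifford_mult n x (?S (\<lambda>C. x C + y C) m) D + clifford_mult n y (?S (\<lambda>C. x C + y C) m) D" for D
    using clifford_mult_exp_term_left[OF cl_supported_add[OF x y], of m]
    by (simp add: clifford_mult_add_left fun_eq_iff del: of_nat_Suc)
  also have "\<dots> D = (\<Sum>i\<le>m. clifford_mult n (clifford_mult n x (?S x i)) (?S y (m - i)) D)
      + (\<Sum>i\<le>m. clifford_mult n (?S x i) (clifford_mult n y (?S y (m - i))) D)" for D
  proof -
    have "clifford_mult n y (?P i j) = clifford_mult n (?S x i) (clifford_mult n y (?S y j))" for i j
      by (metis clifford_mult_assoc clifford_exp_term_commute[OF y comm])
    then show ?thesis by (simp add: Suc clifford_mult_sum_right clifford_mult_assoc)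
  qed
  also have "\<dots> D = (\<Sum>i\<le>m. of_nat (Suc i) * ?P (Suc i) (m - i) D)
      + (\<Sum>i\<le>m. of_nat (Suc m - i) * ?P i (Suc m - i) D)" for D
    by (simp add: clifford_mult_exp_term_left[OF x] clifford_mult_exp_term_left[OF y]
        clifford_mult_scale_left clifford_mult_scale_right Suc_diff_le del: of_nat_Suc)
  also have "\<dots> D = (\<Sum>i\<le>Suc m. of_nat i * ?P i (Suc m - i) D)
      + (\<Sum>i\<le>Suc m. of_nat (Suc m - i) * ?P i (Suc m - i) D)" for D
  proof -
    have "(\<Sum>i\<le>Suc m. of_nat i * ?P i (Suc m - i) D) = (\<Sum>i\<le>m. of_nat (Suc i) * ?P (Suc i) (m - i) D)"
      by (subst sum.atMost_Suc_shift) simp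
    then show ?thesis by simp
  qed
  also have "\<dots> D = of_nat (Suc m) * (\<Sum>i\<le>Suc m. ?P i (Suc m - i) D)" for D
    by (simp add: sum_distrib_left flip: sum.distrib distrib_right of_nat_add del: sum.atMost_Suc)
  finally show ?case
    by (simp add: fun_eq_iff del: of_nat_Suc sum.atMost_Suc)
qed

definition clifford_norm :: "nat \<Rightarrow> (nat set \<Rightarrow> 'a::real_normed_vector) \<Rightarrow> real" where
  "clifford_norm n x = (\<Sum>A\<in>Pow {1..n}. norm (x A))"

lemma clifford_norm_nonneg: "0 \<le> clifford_norm n x"
  unfolding clifford_norm_def by (simp add: sum_nonneg)

lemma norm_le_clifford_norm:
  assumes "cl_supported n x" shows "norm (x C) \<le> clifford_norm n x"
proof (cases "C \<subseteq> {1..n}")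
  case True
  then show ?thesis unfolding clifford_norm_def by (intro member_le_sum) auto
next
  case False
  then show ?thesis using assms clifford_norm_nonneg[of n x] unfolding cl_supported_def by simp
qed

lemma norm_clifford_mult_le:
  fixes x y :: "nat set \<Rightarrow> 'a::real_normed_field"
  shows "norm (clifford_mult n x y C)
    \<le> (\<Sum>A\<in>Pow {1..n}. \<Sum>B\<in>Pow {1..n}. if sym_diff A B = C then norm (x A) * norm (y B) else 0)"
  unfolding clifford_mult_def
  by (rule order_trans[OF norm_sum sum_mono], rule order_trans[OF norm_sum sum_mono])
    (simp add: norm_mult)

lemma clifford_norm_mult_le:
  fixes x y :: "nat set \<Rightarrow> 'a::real_normed_field"
  shows "clifford_norm n (clifford_mult n x y) \<le> clifford_norm n x * clifford_norm n y"
proof -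
  let ?P = "Pow {1..n}"
  have "clifford_norm n (clifford_mult n x y)
      \<le> (\<Sum>C\<in>?P. (\<Sum>A\<in>?P. \<Sum>B\<in>?P. if sym_diff A B = C then norm (x A) * norm (y B) else 0) * 1)"
    unfolding clifford_norm_def mult_1_right by (intro sum_mono norm_clifford_mult_le)
  also have "\<dots> = (\<Sum>A\<in>?P. \<Sum>B\<in>?P. norm (x A) * norm (y B) * 1)"
    by (rule sum_fibres_collapse) auto
  also have "\<dots> = clifford_norm n x * clifford_norm n y"
    unfolding clifford_norm_def by (simp add: sum_product)
  finally show ?thesis .
qed

lemma clifford_norm_pow_le:
  fixes x :: "nat set \<Rightarrow> 'a::real_normed_field"
  shows "clifford_norm n (clifford_pow n x k) \<le> clifford_norm n x ^ k"
proof (induction k)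
  case 0
  show ?case by (simp add: clifford_norm_def clifford_one_def if_distrib cong: if_cong)
next
  case (Suc k)
  have "clifford_norm n (clifford_pow n x (Suc k)) \<le> clifford_norm n (clifford_pow n x k) * clifford_norm n x"
    by (simp add: clifford_norm_mult_le)
  also have "\<dots> \<le> clifford_norm n x ^ Suc k"
    using Suc clifford_norm_nonneg[of n x] by (simp add: mult_left_mono mult.commute)
  finally show ?case .
qed

lemma norm_clifford_exp_term_le: "norm (clifford_exp_term n x k C) \<le> clifford_norm n x ^ k / fact k"
proof -
  have "norm (clifford_pow n x k C) \<le> clifford_norm n x ^ k"
    using norm_le_clifford_norm[OF cl_supported_clifford_pow] clifford_norm_pow_le order_trans by blast
  then show ?thesis
    unfolding clifford_exp_term_def by (simp add: norm_divide divide_right_mono)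
qed

lemma summable_exp_series: "summable (\<lambda>k. r ^ k / fact k :: real)"
  using summable_exp[of r] by (simp add: field_simps)

lemma summable_norm_clifford_exp_term: "summable (\<lambda>k. norm (clifford_exp_term n x k C))"
  by (rule summable_comparison_test[OF _ summable_exp_series]) (auto intro: norm_clifford_exp_term_le)

definition clifford_exp :: "nat \<Rightarrow> (nat set \<Rightarrow> 'a::{real_normed_field, banach}) \<Rightarrow> nat set \<Rightarrow> 'a" where
  "clifford_exp n x = (\<lambda>C. \<Sum>k. clifford_exp_term n x k C)"

lemma sums_clifford_exp: "(\<lambda>k. clifford_exp_term n x k C) sums clifford_exp n x C"
  unfolding clifford_exp_def
  using summable_norm_cancel[OF summable_norm_clifford_exp_term] by (rule summable_sums)

lemma cl_supported_clifford_exp: "cl_supported n (clifford_exp n x)"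
  using cl_supported_clifford_exp_term[of n x] unfolding cl_supported_def clifford_exp_def by simp

lemma sum_swap3:
  "(\<Sum>A\<in>S. \<Sum>B\<in>T. \<Sum>i\<in>I. f A B i) = (\<Sum>i\<in>I. \<Sum>A\<in>S. \<Sum>B\<in>T. f A B i)"
  by (subst sum.swap, rule sum.cong[OF refl], rule sum.swap)

lemma clifford_mult_Cauchy_product_sums:
  fixes a b :: "nat \<Rightarrow> nat set \<Rightarrow> 'a::{real_normed_field, banach}"
  assumes "\<And>A. summable (\<lambda>k. norm (a k A))" "\<And>B. summable (\<lambda>k. norm (b k B))"
  shows "(\<lambda>k. \<Sum>i\<le>k. clifford_mult n (a i) (b (k - i)) D)
    sums clifford_mult n (\<lambda>A. \<Sum>k. a k A) (\<lambda>B. \<Sum>k. b k B) D"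
proof -
  let ?P = "Pow {1..n}"
  let ?s = "\<lambda>A B. of_real (cl_sign A B) :: 'a"
  have sums: "(\<lambda>k. \<Sum>A\<in>?P. \<Sum>B\<in>?P. if sym_diff A B = D then ?s A B * (\<Sum>i\<le>k. a i A * b (k - i) B) else 0)
    sums (\<Sum>A\<in>?P. \<Sum>B\<in>?P. if sym_diff A B = D then ?s A B * ((\<Sum>k. a k A) * (\<Sum>k. b k B)) else 0)"
    by (intro sums_sum) (auto intro!: sums_mult Cauchy_product_sums assms)
  have terms: "(\<Sum>A\<in>?P. \<Sum>B\<in>?P. if sym_diff A B = D then ?s A B * (\<Sum>i\<le>k. a i A * b (k - i) B) else 0)
      = (\<Sum>i\<le>k. clifford_mult n (a i) (b (k - i)) D)" for k
  proof -
    have "(\<Sum>A\<in>?P. \<Sum>B\<in>?P. if sym_diff A B = D then ?s A B * (\<Sum>i\<le>k. a i A * b (k - i) B) else 0)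
      = (\<Sum>A\<in>?P. \<Sum>B\<in>?P. \<Sum>i\<le>k. if sym_diff A B = D then ?s A B * a i A * b (k - i) B else 0)"
      by (intro sum.cong refl) (simp add: sum_distrib_left mult.assoc)
    then show ?thesis
      unfolding clifford_mult_def by (rule trans[OF _ sum_swap3])
  qed
  have "clifford_mult n (\<lambda>A. \<Sum>k. a k A) (\<lambda>B. \<Sum>k. b k B) D
      = (\<Sum>A\<in>?P. \<Sum>B\<in>?P. if sym_diff A B = D then ?s A B * ((\<Sum>k. a k A) * (\<Sum>k. b k B)) else 0)"
    unfolding clifford_mult_def by (simp only: mult.assoc)
  with sums show ?thesis
    by (simp only: terms)
qed

lemma clifford_exp_add:
  assumes "cl_supported n x" "cl_supported n y" "clifford_mult n x y = clifford_mult n y x"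
  shows "clifford_exp n (\<lambda>C. x C + y C) = clifford_mult n (clifford_exp n x) (clifford_exp n y)"
proof
  fix D
  have "(\<lambda>k. clifford_exp_term n (\<lambda>C. x C + y C) k D)
      sums clifford_mult n (clifford_exp n x) (clifford_exp n y) D"
    using clifford_mult_Cauchy_product_sums[OF summable_norm_clifford_exp_term summable_norm_clifford_exp_term]
    unfolding clifford_exp_term_add[OF assms] clifford_exp_def .
  with sums_clifford_exp show "clifford_exp n (\<lambda>C. x C + y C) D = clifford_mult n (clifford_exp n x) (clifford_exp n y) D"
    by (rule sums_unique2)
qed

section \<open>Intrinsic holomorphic functions\<close>

lemma cnj_clifford_mult: "cnj (clifford_mult n x y C) = clifford_mult n (\<lambda>A. cnj (x A)) (\<lambda>B. cnj (y B)) C"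
  unfolding clifford_mult_def by (simp add: if_distrib cong: if_cong)

lemma cnj_clifford_pow: "cnj (clifford_pow n x k C) = clifford_pow n (\<lambda>A. cnj (x A)) k C"
proof (induction k arbitrary: C)
  case 0
  show ?case by (simp add: clifford_one_def)
next
  case (Suc k)
  then show ?case by (simp add: cnj_clifford_mult)
qed

lemma cnj_clifford_exp: "cnj (clifford_exp n x C) = clifford_exp n (\<lambda>A. cnj (x A)) C"
proof -
  have "cnj (clifford_exp_term n x k C) = clifford_exp_term n (\<lambda>A. cnj (x A)) k C" for k
    by (simp add: clifford_exp_term_def cnj_clifford_pow)
  moreover have "(\<lambda>k. cnj (clifford_exp_term n x k C)) sums cnj (clifford_exp n x C)"
    using sums_clifford_exp by (simp only: sums_cnj)
  ultimately have "(\<lambda>k. clifford_exp_term n (\<lambda>A. cnj (x A)) k C) sums cnj (clifford_exp n x C)"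
    by simp
  with sums_clifford_exp show ?thesis
    by (rule sums_unique2[symmetric])
qed

lemma holomorphic_on_clifford_exp:
  assumes hol: "\<And>k C. (\<lambda>z. clifford_pow n (F z) k C) holomorphic_on UNIV"
    and cont: "continuous_on UNIV (\<lambda>z. clifford_norm n (F z))"
  shows "(\<lambda>z. clifford_exp n (F z) C) holomorphic_on UNIV"
proof (rule holomorphic_uniform_sequence[where f = "\<lambda>N z. \<Sum>k<N. clifford_exp_term n (F z) k C"])
  fix N
  show "(\<lambda>z. \<Sum>k<N. clifford_exp_term n (F z) k C) holomorphic_on UNIV"
    unfolding clifford_exp_term_def by (intro holomorphic_intros hol) simp
next
  fix z0 :: complex
  have "bounded ((\<lambda>z. clifford_norm n (F z)) ` cball z0 1)"
    by (intro compact_imp_bounded compact_continuous_image continuous_on_subset[OF cont]) auto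
  then obtain M where M: "\<And>z. z \<in> cball z0 1 \<Longrightarrow> clifford_norm n (F z) \<le> M"
    unfolding bounded_iff real_norm_def by (meson abs_le_D1 imageI)
  have "uniform_limit (cball z0 1) (\<lambda>N z. \<Sum>k<N. clifford_exp_term n (F z) k C)
      (\<lambda>z. clifford_exp n (F z) C) sequentially"
    unfolding clifford_exp_def
  proof (rule Weierstrass_m_test[OF _ summable_exp_series[of M]])
    fix k z assume "z \<in> cball z0 1"
    have "norm (clifford_exp_term n (F z) k C) \<le> clifford_norm n (F z) ^ k / fact k"
      by (rule norm_clifford_exp_term_le)
    also have "\<dots> \<le> M ^ k / fact k"
      using M[OF \<open>z \<in> cball z0 1\<close>] clifford_norm_nonneg[of n "F z"]
      by (intro divide_right_mono power_mono) auto
    finally show "norm (clifford_exp_term n (F z) k C) \<le> M ^ k / fact k" .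
  qed
  then show "\<exists>d>0. cball z0 d \<subseteq> UNIV \<and> uniform_limit (cball z0 d)
      (\<lambda>N z. \<Sum>k<N. clifford_exp_term n (F z) k C) (\<lambda>z. clifford_exp n (F z) C) sequentially"
    by (intro exI[of _ 1]) auto
qed simp

definition intrinsic_holomorphic :: "nat \<Rightarrow> (complex \<Rightarrow> nat set \<Rightarrow> complex) \<Rightarrow> bool" where
  "intrinsic_holomorphic n F \<longleftrightarrow> (\<forall>z. cl_supported n (F z)) \<and> (\<forall>z C. F (cnj z) C = cnj (F z C))
     \<and> (\<forall>C. (\<lambda>z. F z C) holomorphic_on UNIV)"

lemma intrinsic_holomorphic_one: "intrinsic_holomorphic n (\<lambda>z. clifford_one)"
  unfolding intrinsic_holomorphic_def using cl_supported_clifford_one by (simp add: clifford_one_def)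

lemma intrinsic_holomorphic_add:
  "intrinsic_holomorphic n F \<Longrightarrow> intrinsic_holomorphic n G \<Longrightarrow> intrinsic_holomorphic n (\<lambda>z C. F z C + G z C)"
  unfolding intrinsic_holomorphic_def by (auto simp: cl_supported_add intro!: holomorphic_intros)

lemma intrinsic_holomorphic_mult:
  assumes F: "intrinsic_holomorphic n F" and G: "intrinsic_holomorphic n G"
  shows "intrinsic_holomorphic n (\<lambda>z. clifford_mult n (F z) (G z))"
proof -
  have "F (cnj z) = (\<lambda>A. cnj (F z A))" "G (cnj z) = (\<lambda>A. cnj (G z A))" for z
    using F G unfolding intrinsic_holomorphic_def by auto
  moreover have "(\<lambda>z. clifford_mult n (F z) (G z) C) holomorphic_on UNIV" for C
    unfolding clifford_mult_def
  proof (intro holomorphic_on_sum)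
    fix A B
    show "(\<lambda>z. if sym_diff A B = C then of_real (cl_sign A B) * F z A * G z B else 0) holomorphic_on UNIV"
      using F G unfolding intrinsic_holomorphic_def
      by (cases "sym_diff A B = C") (auto intro!: holomorphic_intros)
  qed
  ultimately show ?thesis
    unfolding intrinsic_holomorphic_def by (simp add: cl_supported_clifford_mult cnj_clifford_mult)
qed

lemma intrinsic_holomorphic_pow:
  "intrinsic_holomorphic n F \<Longrightarrow> intrinsic_holomorphic n (\<lambda>z. clifford_pow n (F z) k)"
  by (induction k) (simp_all add: intrinsic_holomorphic_one intrinsic_holomorphic_mult)

lemma intrinsic_holomorphic_exp:
  assumes F: "intrinsic_holomorphic n F"
  shows "intrinsic_holomorphic n (\<lambda>z. clifford_exp n (F z))"
proof -
  have "continuous_on UNIV (\<lambda>z. clifford_norm n (F z))"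
    using F unfolding intrinsic_holomorphic_def clifford_norm_def
    by (intro continuous_on_sum continuous_on_norm holomorphic_on_imp_continuous_on) auto
  moreover have "(\<lambda>z. clifford_pow n (F z) k C) holomorphic_on UNIV" for k C
    using intrinsic_holomorphic_pow[OF F] unfolding intrinsic_holomorphic_def by blast
  moreover have "F (cnj z) = (\<lambda>A. cnj (F z A))" for z
    using F unfolding intrinsic_holomorphic_def by auto
  ultimately show ?thesis
    unfolding intrinsic_holomorphic_def
    by (simp add: cl_supported_clifford_exp cnj_clifford_exp holomorphic_on_clifford_exp)
qed

section \<open>Stem functions and the Cauchy-Riemann system\<close>

lemma has_vector_derivative_Complex_left: "((\<lambda>t. Complex t v) has_vector_derivative 1) (at u)"
  unfolding Complex_eq by (auto intro!: derivative_eq_intros)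

lemma has_vector_derivative_Complex_right: "((\<lambda>s. Complex u s) has_vector_derivative \<i>) (at v)"
  unfolding Complex_eq by (auto intro!: derivative_eq_intros)

lemma holomorphic_partial_derivatives:
  fixes u v :: real
  assumes "\<phi> holomorphic_on UNIV"
  defines "D \<equiv> deriv \<phi> (Complex u v)"
  shows "deriv (\<lambda>t. Re (\<phi> (Complex t v))) u = Re D" "deriv (\<lambda>t. Im (\<phi> (Complex t v))) u = Im D"
    "deriv (\<lambda>s. Re (\<phi> (Complex u s))) v = - Im D" "deriv (\<lambda>s. Im (\<phi> (Complex u s))) v = Re D"
proof -
  have \<phi>: "(\<phi> has_field_derivative D) (at (Complex u v))"
    unfolding D_def using assms by (simp add: holomorphic_derivI)
  have "((\<lambda>t. \<phi> (Complex t v)) has_vector_derivative D) (at u)"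
    using field_vector_diff_chain_at[OF has_vector_derivative_Complex_left \<phi>] by (simp add: o_def)
  then show "deriv (\<lambda>t. Re (\<phi> (Complex t v))) u = Re D" "deriv (\<lambda>t. Im (\<phi> (Complex t v))) u = Im D"
    by (auto intro: DERIV_imp_deriv simp: has_vector_derivative_complex_iff)
  have "((\<lambda>s. \<phi> (Complex u s)) has_vector_derivative \<i> * D) (at v)"
    using field_vector_diff_chain_at[OF has_vector_derivative_Complex_right \<phi>] by (simp add: o_def)
  then show "deriv (\<lambda>s. Re (\<phi> (Complex u s))) v = - Im D" "deriv (\<lambda>s. Im (\<phi> (Complex u s))) v = Re D"
    by (auto intro: DERIV_imp_deriv simp: has_vector_derivative_complex_iff)
qed

lemma holomorphic_Re_Im_differentiable:
  assumes "\<phi> holomorphic_on UNIV"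
  shows "(\<lambda>q. Re (\<phi> (Complex (fst q) (snd q)))) differentiable (at p)"
    "(\<lambda>q. Im (\<phi> (Complex (fst q) (snd q)))) differentiable (at p)"
proof -
  have "((\<lambda>q. Complex (fst q) (snd q)) has_derivative (\<lambda>q. Complex (fst q) (snd q))) (at p)"
    unfolding Complex_eq by (auto intro!: derivative_eq_intros)
  moreover have "(\<phi> has_derivative (*) (deriv \<phi> (Complex (fst p) (snd p)))) (at (Complex (fst p) (snd p)))"
    using assms by (simp add: holomorphic_derivI has_field_derivative_imp_has_derivative)
  ultimately have "((\<lambda>q. \<phi> (Complex (fst q) (snd q))) has_derivative
      (\<lambda>q. deriv \<phi> (Complex (fst p) (snd p)) * Complex (fst q) (snd q))) (at p)"
    by (rule has_derivative_compose)
  then show "(\<lambda>q. Re (\<phi> (Complex (fst q) (snd q)))) differentiable (at p)"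
    "(\<lambda>q. Im (\<phi> (Complex (fst q) (snd q)))) differentiable (at p)"
    by (auto intro: differentiableI[OF has_derivative_Re] differentiableI[OF has_derivative_Im])
qed

lemma linear_real_pair: "linear D \<Longrightarrow> D (x, y) = x * D (1, 0) + y * D (0, 1 :: real)"
  using linear_add[of D "(x, 0)" "(0, y)"] linear_scale[of D x "(1, 0)"] linear_scale[of D y "(0, 1)"]
  by simp

lemma deriv_partial_of_has_derivative:
  fixes a :: "real \<times> real \<Rightarrow> real"
  assumes a: "(a has_derivative D) (at (u, v))"
  shows "deriv (\<lambda>t. a (t, v)) u = D (1, 0)" "deriv (\<lambda>s. a (u, s)) v = D (0, 1)"
proof -
  have lin: "linear D"
    using a by (rule has_derivative_linear)
  have "D (h, 0) = D (1, 0) * h" "D (0, h) = D (0, 1) * h" for h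
    using linear_real_pair[OF lin, of h 0] linear_real_pair[OF lin, of 0 h] by simp_all
  then have scale: "(\<lambda>h. D (h, 0)) = (*) (D (1, 0))" "(\<lambda>h. D (0, h)) = (*) (D (0, 1))"
    by blast+
  have "((\<lambda>t. (t, v)) has_derivative (\<lambda>h. (h, 0))) (at u)"
    by (auto intro!: derivative_eq_intros)
  from has_derivative_compose[OF this a]
  show "deriv (\<lambda>t. a (t, v)) u = D (1, 0)"
    unfolding scale has_field_derivative_def[symmetric] by (rule DERIV_imp_deriv)
  have "((\<lambda>s. (u, s)) has_derivative (\<lambda>h. (0, h))) (at v)"
    by (auto intro!: derivative_eq_intros)
  from has_derivative_compose[OF this a]
  show "deriv (\<lambda>s. a (u, s)) v = D (0, 1)"
    unfolding scale has_field_derivative_def[symmetric] by (rule DERIV_imp_deriv)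
qed

lemma holomorphic_if_Cauchy_Riemann:
  fixes a b :: "real \<times> real \<Rightarrow> real"
  assumes a: "\<And>p. a differentiable (at p)" and b: "\<And>p. b differentiable (at p)"
    and CR1: "\<And>u v. deriv (\<lambda>t. a (t, v)) u = deriv (\<lambda>s. b (u, s)) v"
    and CR2: "\<And>u v. deriv (\<lambda>t. b (t, v)) u = - deriv (\<lambda>s. a (u, s)) v"
  shows "(\<lambda>z. Complex (a (Re z, Im z)) (b (Re z, Im z))) holomorphic_on UNIV"
proof -
  have "(\<lambda>z. Complex (a (Re z, Im z)) (b (Re z, Im z))) field_differentiable (at z)" for z
  proof -
    obtain Da Db where Da: "(a has_derivative Da) (at (Re z, Im z))" and Db: "(b has_derivative Db) (at (Re z, Im z))"
      using a b unfolding differentiable_def by blast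
    have "Da (1, 0) = Db (0, 1)" "Db (1, 0) = - Da (0, 1)"
      using CR1 CR2 deriv_partial_of_has_derivative[OF Da] deriv_partial_of_has_derivative[OF Db] by metis+
    then have "Complex (Da (Re h, Im h)) (Db (Re h, Im h)) = Complex (Da (1, 0)) (Db (1, 0)) * h" for h
      using linear_real_pair[OF has_derivative_linear[OF Da], of "Re h" "Im h"]
        linear_real_pair[OF has_derivative_linear[OF Db], of "Re h" "Im h"]
      by (simp add: complex_eq_iff algebra_simps)
    moreover have "((\<lambda>z. Complex (a (Re z, Im z)) (b (Re z, Im z))) has_derivative
        (\<lambda>h. Complex (Da (Re h, Im h)) (Db (Re h, Im h)))) (at z)"
    proof -
      have "((\<lambda>z. (Re z, Im z)) has_derivative (\<lambda>h. (Re h, Im h))) (at z)"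
        by (auto intro!: derivative_eq_intros)
      from has_derivative_compose[OF this Da] has_derivative_compose[OF this Db] show ?thesis
        unfolding Complex_eq by (auto intro!: derivative_eq_intros)
    qed
    ultimately show ?thesis
      unfolding field_differentiable_def has_field_derivative_def by auto
  qed
  then show ?thesis
    unfolding holomorphic_on_def by (auto intro: field_differentiable_at_within)
qed

definition stem_re :: "(complex \<Rightarrow> nat set \<Rightarrow> complex) \<Rightarrow> real \<times> real \<Rightarrow> cl" where
  "stem_re F = (\<lambda>p C. Re (F (Complex (fst p) (snd p)) C))"

definition stem_im :: "(complex \<Rightarrow> nat set \<Rightarrow> complex) \<Rightarrow> real \<times> real \<Rightarrow> cl" where
  "stem_im F = (\<lambda>p C. Im (F (Complex (fst p) (snd p)) C))"

definition complex_stem :: "(real \<times> real \<Rightarrow> cl) \<Rightarrow> (real \<times> real \<Rightarrow> cl) \<Rightarrow> complex \<Rightarrow> nat set \<Rightarrow> complex" where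
  "complex_stem \<alpha> \<beta> = (\<lambda>z C. Complex (\<alpha> (Re z, Im z) C) (\<beta> (Re z, Im z) C))"

lemma stem_re_complex_stem [simp]: "stem_re (complex_stem \<alpha> \<beta>) = \<alpha>"
  unfolding stem_re_def complex_stem_def by simp

lemma stem_im_complex_stem [simp]: "stem_im (complex_stem \<alpha> \<beta>) = \<beta>"
  unfolding stem_im_def complex_stem_def by simp

lemma is_stem_parity:
  assumes "is_stem n \<alpha> \<beta>"
  shows "\<alpha> (u, -v) = \<alpha> (u, v)" "\<beta> (u, -v) = (\<lambda>C. - \<beta> (u, v) C)"
  using assms unfolding is_stem_def by auto

lemma is_stem_stem_re_im:
  assumes F: "intrinsic_holomorphic n F"
  shows "is_stem n (stem_re F) (stem_im F)"
proof -
  have supp: "cl_supported n (F z)" and cnj: "F (cnj z) C = cnj (F z C)"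
    and hol: "(\<lambda>z. F z C) holomorphic_on UNIV" for z C
    using F unfolding intrinsic_holomorphic_def by auto
  have "Complex u (-v) = cnj (Complex u v)" for u v
    by (simp add: complex_eq_iff)
  then show ?thesis
    using supp unfolding is_stem_def stem_re_def stem_im_def cl_supported_def
    by (simp add: cnj holomorphic_Re_Im_differentiable[OF hol] holomorphic_partial_derivatives[OF hol])
qed

lemma intrinsic_holomorphic_complex_stem:
  assumes "is_stem n \<alpha> \<beta>"
  shows "intrinsic_holomorphic n (complex_stem \<alpha> \<beta>)"
  using assms unfolding is_stem_def intrinsic_holomorphic_def cl_supported_def complex_stem_def
  by (auto simp: complex_eq_iff intro!: holomorphic_if_Cauchy_Riemann[where a = "\<lambda>q. \<alpha> q _" and b = "\<lambda>q. \<beta> q _"])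

section \<open>Slice functions induced by intrinsic holomorphic functions\<close>

definition cl_e1 :: cl where
  "cl_e1 = (\<lambda>C. if C = {1} then 1 else 0)"

lemma cl_e1_in_sphere:
  assumes "1 \<le> n" shows "cl_e1 \<in> cl_sphere n"
proof -
  have "(\<Sum>i=1..n. (cl_e1 {i})\<^sup>2) = (\<Sum>i\<in>{1..n}. if i = 1 then 1 else 0)"
    unfolding cl_e1_def by (intro sum.cong) auto
  then show ?thesis
    using assms unfolding cl_sphere_def by (auto simp: cl_e1_def)
qed

lemma clifford_mult_e1_e1:
  assumes "1 \<le> n" shows "clifford_mult n cl_e1 cl_e1 = (\<lambda>C. - clifford_one C)"
proof
  fix C
  let ?P = "Pow {1..n}"
  have "{(a, b). a \<in> {1::nat} \<and> b \<in> {1} \<and> b < a} = {}"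
    by auto
  then have sign: "cl_sign {1} {1} = -1"
    unfolding cl_sign_def by (simp only:) simp
  have "clifford_mult n cl_e1 cl_e1 C = (\<Sum>A\<in>?P. \<Sum>B\<in>?P. if A = {1} then
      (if B = {1} then (if sym_diff A B = C then cl_sign A B else 0) else 0) else 0)"
    unfolding clifford_mult_def cl_e1_def by (intro sum.cong refl) auto
  also have "\<dots> = (\<Sum>A\<in>?P. if A = {1} then
      (\<Sum>B\<in>?P. if B = {1} then (if sym_diff A B = C then cl_sign A B else 0) else 0) else 0)"
    by (simp only: if_sum_distrib)
  also have "\<dots> = (if sym_diff {1} {1} = C then cl_sign {1} {1} else 0)"
    using assms by simp
  also have "\<dots> = - clifford_one C"
    unfolding sign clifford_one_def by auto
  finally show "clifford_mult n cl_e1 cl_e1 C = - clifford_one C" .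
qed

lemma cl_mult_e1_e1_left:
  assumes "1 \<le> n" "cl_supported n y"
  shows "cl_mult n cl_e1 (cl_mult n cl_e1 y) = (\<lambda>C. - y C)"
  using assms unfolding cl_mult_eq_clifford_mult
  by (simp add: clifford_mult_e1_e1 clifford_mult_minus_left clifford_mult_one_left flip: clifford_mult_assoc)

lemma cl_mult_e1_left_inj:
  assumes "1 \<le> n" "cl_supported n y" "cl_supported n y'" "cl_mult n cl_e1 y = cl_mult n cl_e1 y'"
  shows "y = y'"
proof -
  have "(\<lambda>C. - y C) = (\<lambda>C. - y' C)"
    using cl_mult_e1_e1_left[OF assms(1,2)] cl_mult_e1_e1_left[OF assms(1,3)] assms(4) by simp
  then show ?thesis
    by (simp add: fun_eq_iff)
qed

lemma is_stem_supported:
  assumes "is_stem n \<alpha> \<beta>" shows "cl_supported n (\<alpha> p)" "cl_supported n (\<beta> p)"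
  using assms unfolding is_stem_def cl_supported_def by blast+

lemma stems_of_unique:
  assumes n: "1 \<le> n" and s: "stems_of n f \<alpha> \<beta>" and s': "stems_of n f \<alpha>' \<beta>'"
  shows "\<alpha> = \<alpha>' \<and> \<beta> = \<beta>'"
proof -
  have st: "is_stem n \<alpha> \<beta>" and st': "is_stem n \<alpha>' \<beta>'"
    using s s' unfolding stems_of_def by auto
  have "\<alpha> (u, v) = \<alpha>' (u, v) \<and> \<beta> (u, v) = \<beta>' (u, v)" for u v
  proof -
    have eq: "cl_add (\<alpha> (u, t)) (cl_mult n cl_e1 (\<beta> (u, t))) = cl_add (\<alpha>' (u, t)) (cl_mult n cl_e1 (\<beta>' (u, t)))" for t
      using s s' cl_e1_in_sphere[OF n] unfolding stems_of_def by metis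
    have plus: "\<alpha> (u, v) C + cl_mult n cl_e1 (\<beta> (u, v)) C = \<alpha>' (u, v) C + cl_mult n cl_e1 (\<beta>' (u, v)) C"
      and minus: "\<alpha> (u, v) C - cl_mult n cl_e1 (\<beta> (u, v)) C = \<alpha>' (u, v) C - cl_mult n cl_e1 (\<beta>' (u, v)) C" for C
      using fun_cong[OF eq[of v], of C] fun_cong[OF eq[of "-v"], of C]
      by (simp_all add: cl_add_def is_stem_parity[OF st] is_stem_parity[OF st'] cl_mult_eq_clifford_mult
          clifford_mult_minus_right)
    have "\<alpha> (u, v) C = \<alpha>' (u, v) C" "cl_mult n cl_e1 (\<beta> (u, v)) C = cl_mult n cl_e1 (\<beta>' (u, v)) C" for C
      using plus[of C] minus[of C] by linarith+
    then have "\<alpha> (u, v) = \<alpha>' (u, v)" "cl_mult n cl_e1 (\<beta> (u, v)) = cl_mult n cl_e1 (\<beta>' (u, v))"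
      by blast+
    moreover have "\<beta> (u, v) = \<beta>' (u, v)"
      using cl_mult_e1_left_inj[OF n is_stem_supported(2)[OF st] is_stem_supported(2)[OF st']] calculation(2) .
    ultimately show ?thesis by simp
  qed
  then show ?thesis by auto
qed

lemma cl_sphere_empty: "w \<in> cl_sphere n \<Longrightarrow> w {} = 0"
  unfolding cl_sphere_def by force

lemma slice_pt_eq_cases:
  assumes w: "w \<in> cl_sphere n" and w': "w' \<in> cl_sphere n"
    and eq: "slice_pt u w v = slice_pt u' w' v'"
  shows "u' = u \<and> (v' = v \<and> w' = w \<or> v' = -v \<and> w' = (\<lambda>C. - w C) \<or> v = 0 \<and> v' = 0)"
proof -
  have coeff: "(if C = {} then u else 0) + v * w C = (if C = {} then u' else 0) + v' * w' C" for C
    using fun_cong[OF eq, of C] unfolding slice_pt_def cl_add_def cl_real_def cl_scale_def .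
  have u: "u' = u"
    using coeff[of "{}"] cl_sphere_empty[OF w] cl_sphere_empty[OF w'] by simp
  have vw: "v * w C = v' * w' C" for C
    using coeff[of C] u by (cases "C = {}") auto
  have "v\<^sup>2 = (\<Sum>i=1..n. (v * w {i})\<^sup>2)" "v'\<^sup>2 = (\<Sum>i=1..n. (v' * w' {i})\<^sup>2)"
    using w w' unfolding cl_sphere_def by (simp_all add: power_mult_distrib flip: sum_distrib_left)
  then have "v\<^sup>2 = v'\<^sup>2"
    by (simp only: vw)
  then have "v' = v \<or> v' = -v"
    by (auto simp: power2_eq_iff)
  moreover have "w' = w" if "v' = v" "v \<noteq> 0"
    using vw that by (auto simp: fun_eq_iff)
  moreover have "w' = (\<lambda>C. - w C)" if "v' = -v" "v \<noteq> 0"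
  proof
    fix C
    have "v * w' C = v * (- w C)"
      using vw[of C] that(1) by simp
    then show "w' C = - w C"
      using mult_left_cancel[OF that(2)] by blast
  qed
  ultimately show ?thesis
    using u by auto
qed

definition slice_value :: "nat \<Rightarrow> (complex \<Rightarrow> nat set \<Rightarrow> complex) \<Rightarrow> real \<Rightarrow> cl \<Rightarrow> real \<Rightarrow> cl" where
  "slice_value n F u w v = cl_add (stem_re F (u, v)) (cl_mult n w (stem_im F (u, v)))"

lemma slice_value_eq_if_slice_pt_eq:
  assumes F: "intrinsic_holomorphic n F" and w: "w \<in> cl_sphere n" and w': "w' \<in> cl_sphere n"
    and eq: "slice_pt u w v = slice_pt u' w' v'"
  shows "slice_value n F u' w' v' = slice_value n F u w v"
proof -
  note parity = is_stem_parity[OF is_stem_stem_re_im[OF F]]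
  have "stem_im F (u, 0) = (\<lambda>C. 0)"
    using parity(2)[of u 0] by (simp add: fun_eq_iff)
  then show ?thesis
    using slice_pt_eq_cases[OF w w' eq] unfolding slice_value_def cl_mult_eq_clifford_mult
    by (auto simp: parity clifford_mult_minus_left clifford_mult_minus_right clifford_mult_zero_right)
qed

lemma Re_clifford_mult:
  "Re (clifford_mult n X Y C)
    = clifford_mult n (\<lambda>A. Re (X A)) (\<lambda>B. Re (Y B)) C - clifford_mult n (\<lambda>A. Im (X A)) (\<lambda>B. Im (Y B)) C"
proof -
  have "Re (if sym_diff A B = C then of_real (cl_sign A B) * X A * Y B else 0)
      = (if sym_diff A B = C then cl_sign A B * Re (X A) * Re (Y B) else 0)
      - (if sym_diff A B = C then cl_sign A B * Im (X A) * Im (Y B) else 0)" for A B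
    by simp
  then show ?thesis
    unfolding clifford_mult_def by (simp add: sum_subtractf cong: if_cong)
qed

lemma Im_clifford_mult:
  "Im (clifford_mult n X Y C)
    = clifford_mult n (\<lambda>A. Im (X A)) (\<lambda>B. Re (Y B)) C + clifford_mult n (\<lambda>A. Re (X A)) (\<lambda>B. Im (Y B)) C"
proof -
  have "Im (if sym_diff A B = C then of_real (cl_sign A B) * X A * Y B else 0)
      = (if sym_diff A B = C then cl_sign A B * Im (X A) * Re (Y B) else 0)
      + (if sym_diff A B = C then cl_sign A B * Re (X A) * Im (Y B) else 0)" for A B
    by (simp add: algebra_simps)
  then show ?thesis
    unfolding clifford_mult_def by (simp add: sum.distrib cong: if_cong)
qed

lemma star_formula_eq_slice_value:
  "cl_add (cl_add (cl_mult n (stem_re F (u, v)) (stem_re G (u, v)))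
       (cl_scale (-1) (cl_mult n (stem_im F (u, v)) (stem_im G (u, v)))))
     (cl_mult n w (cl_add (cl_mult n (stem_im F (u, v)) (stem_re G (u, v)))
       (cl_mult n (stem_re F (u, v)) (stem_im G (u, v)))))
   = slice_value n (\<lambda>z. clifford_mult n (F z) (G z)) u w v"
  unfolding slice_value_def stem_re_def stem_im_def cl_mult_eq_clifford_mult
  by (simp add: cl_add_def cl_scale_def Re_clifford_mult Im_clifford_mult)

definition slice_induced :: "nat \<Rightarrow> (cl \<Rightarrow> cl) \<Rightarrow> (complex \<Rightarrow> nat set \<Rightarrow> complex) \<Rightarrow> bool" where
  "slice_induced n f F \<longleftrightarrow> intrinsic_holomorphic n F \<and> stems_of n f (stem_re F) (stem_im F)"

lemma slice_inducedI:
  assumes "intrinsic_holomorphic n F"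
    and "\<And>w u v. w \<in> cl_sphere n \<Longrightarrow> f (slice_pt u w v) = slice_value n F u w v"
  shows "slice_induced n f F"
  using assms is_stem_stem_re_im[OF assms(1)]
  unfolding slice_induced_def stems_of_def slice_value_def by auto

lemma slice_induced_slice_pt:
  "slice_induced n f F \<Longrightarrow> w \<in> cl_sphere n \<Longrightarrow> f (slice_pt u w v) = slice_value n F u w v"
  unfolding slice_induced_def stems_of_def slice_value_def by auto

lemma slice_monogenic_induced:
  assumes "slice_monogenic n f" shows "\<exists>F. slice_induced n f F"
proof -
  obtain \<alpha> \<beta> where s: "stems_of n f \<alpha> \<beta>"
    using assms unfolding slice_monogenic_def by blast
  then have "intrinsic_holomorphic n (complex_stem \<alpha> \<beta>)"
    unfolding stems_of_def by (blast intro: intrinsic_holomorphic_complex_stem)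
  with s show ?thesis
    unfolding slice_induced_def by auto
qed

lemma slice_induced_star:
  assumes n: "1 \<le> n" and f: "slice_induced n f F" and g: "slice_induced n g G"
  shows "slice_induced n (star n f g) (\<lambda>z. clifford_mult n (F z) (G z))"
proof (rule slice_inducedI)
  have F: "intrinsic_holomorphic n F" and sf: "stems_of n f (stem_re F) (stem_im F)"
    and G: "intrinsic_holomorphic n G" and sg: "stems_of n g (stem_re G) (stem_im G)"
    using f g unfolding slice_induced_def by auto
  show FG: "intrinsic_holomorphic n (\<lambda>z. clifford_mult n (F z) (G z))"
    using F G by (rule intrinsic_holomorphic_mult)
  fix w u v assume w: "w \<in> cl_sphere n"
  show "star n f g (slice_pt u w v) = slice_value n (\<lambda>z. clifford_mult n (F z) (G z)) u w v"
    unfolding star_def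
  txt \<open>The value chosen by SOME is forced: the stems are unique, and the formula does not
    depend on how the point is written as u + w v.\<close>
  proof (rule some_equality)
    fix y
    assume "\<exists>u' v' w' \<alpha> \<beta> \<gamma> \<delta>. w' \<in> cl_sphere n \<and> slice_pt u w v = slice_pt u' w' v' \<and>
      stems_of n f \<alpha> \<beta> \<and> stems_of n g \<gamma> \<delta> \<and>
      y = cl_add (cl_add (cl_mult n (\<alpha> (u', v')) (\<gamma> (u', v')))
            (cl_scale (-1) (cl_mult n (\<beta> (u', v')) (\<delta> (u', v')))))
          (cl_mult n w' (cl_add (cl_mult n (\<beta> (u', v')) (\<gamma> (u', v')))
            (cl_mult n (\<alpha> (u', v')) (\<delta> (u', v')))))"
    then obtain u' v' w' \<alpha> \<beta> \<gamma> \<delta> where w': "w' \<in> cl_sphere n" and eq: "slice_pt u w v = slice_pt u' w' v'"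
      and s1: "stems_of n f \<alpha> \<beta>" and s2: "stems_of n g \<gamma> \<delta>"
      and y: "y = cl_add (cl_add (cl_mult n (\<alpha> (u', v')) (\<gamma> (u', v')))
            (cl_scale (-1) (cl_mult n (\<beta> (u', v')) (\<delta> (u', v')))))
          (cl_mult n w' (cl_add (cl_mult n (\<beta> (u', v')) (\<gamma> (u', v')))
            (cl_mult n (\<alpha> (u', v')) (\<delta> (u', v')))))"
      by blast
    moreover have "\<alpha> = stem_re F \<and> \<beta> = stem_im F" "\<gamma> = stem_re G \<and> \<delta> = stem_im G"
      using stems_of_unique[OF n s1 sf] stems_of_unique[OF n s2 sg] by auto
    ultimately have "y = slice_value n (\<lambda>z. clifford_mult n (F z) (G z)) u' w' v'"
      by (simp add: star_formula_eq_slice_value)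
    then show "y = slice_value n (\<lambda>z. clifford_mult n (F z) (G z)) u w v"
      using slice_value_eq_if_slice_pt_eq[OF FG w w' eq] by simp
  qed (use w sf sg star_formula_eq_slice_value[of n F u v G w, symmetric] in blast)
qed

lemma slice_value_eq: "slice_value n F u w v
    = cl_add (\<lambda>A. Re (F (Complex u v) A)) (cl_mult n w (\<lambda>A. Im (F (Complex u v) A)))"
  unfolding slice_value_def stem_re_def stem_im_def by simp

lemma slice_induced_one: "slice_induced n (\<lambda>x. cl_real 1) (\<lambda>z. clifford_one)"
proof (rule slice_inducedI[OF intrinsic_holomorphic_one])
  fix w u v
  have "(\<lambda>A. Re (clifford_one A :: complex)) = clifford_one" "(\<lambda>A. Im (clifford_one A :: complex)) = (\<lambda>A. 0)"
    by (auto simp: clifford_one_def fun_eq_iff)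
  then show "cl_real 1 = slice_value n (\<lambda>z. clifford_one) u w v"
    unfolding slice_value_eq cl_real_one
    by (simp add: cl_add_def cl_mult_eq_clifford_mult clifford_mult_zero_right)
qed

lemma slice_induced_pow:
  assumes "1 \<le> n" "slice_induced n f F"
  shows "slice_induced n (star_pow n f k) (\<lambda>z. clifford_pow n (F z) k)"
  by (induction k) (simp_all add: slice_induced_one slice_induced_star[OF assms(1) _ assms(2)])

lemma slice_induced_add:
  assumes f: "slice_induced n f F" and g: "slice_induced n g G"
  shows "slice_induced n (\<lambda>x. cl_add (f x) (g x)) (\<lambda>z C. F z C + G z C)"
proof (rule slice_inducedI)
  show "intrinsic_holomorphic n (\<lambda>z C. F z C + G z C)"
    using f g unfolding slice_induced_def by (blast intro: intrinsic_holomorphic_add)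
  fix w u v assume w: "w \<in> cl_sphere n"
  show "cl_add (f (slice_pt u w v)) (g (slice_pt u w v)) = slice_value n (\<lambda>z C. F z C + G z C) u w v"
    unfolding slice_induced_slice_pt[OF f w] slice_induced_slice_pt[OF g w] slice_value_eq
    by (simp add: cl_add_def cl_mult_eq_clifford_mult clifford_mult_add_right add_ac)
qed

lemma sums_slice_combination:
  assumes "\<And>A. (\<lambda>k. X k A) sums Y A"
  shows "(\<lambda>k. cl_add (\<lambda>A. Re (X k A)) (cl_mult n w (\<lambda>A. Im (X k A))) C)
    sums cl_add (\<lambda>A. Re (Y A)) (cl_mult n w (\<lambda>A. Im (Y A))) C"
  unfolding cl_add_def cl_mult_def
proof (intro sums_add sums_sum)
  show "(\<lambda>k. Re (X k C)) sums Re (Y C)"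
    using assms by (rule sums_Re)
  fix A B
  have "(\<lambda>k. Im (X k B)) sums Im (Y B)"
    using assms by (rule sums_Im)
  then show "(\<lambda>k. if sym_diff A B = C then cl_sign A B * w A * Im (X k B) else 0)
    sums (if sym_diff A B = C then cl_sign A B * w A * Im (Y B) else 0)"
    by (cases "sym_diff A B = C") (auto intro: sums_mult)
qed

lemma slice_induced_exp:
  assumes n: "1 \<le> n" and f: "slice_induced n f F"
  shows "slice_induced n (star_exp n f) (\<lambda>z. clifford_exp n (F z))"
proof (rule slice_inducedI)
  show "intrinsic_holomorphic n (\<lambda>z. clifford_exp n (F z))"
    using f unfolding slice_induced_def by (blast intro: intrinsic_holomorphic_exp)
  fix w u v assume w: "w \<in> cl_sphere n"
  let ?X = "F (Complex u v)"
  have "star_pow n f k (slice_pt u w v) C / fact k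
      = cl_add (\<lambda>A. Re (clifford_exp_term n ?X k A)) (cl_mult n w (\<lambda>A. Im (clifford_exp_term n ?X k A))) C" for k C
  proof -
    have Re_Im: "Re (z / fact k) = Re z / fact k" "Im (z / fact k) = Im z / fact k" for z
      by (metis Re_divide_of_real of_real_fact) (metis Im_divide_of_real of_real_fact)
    show ?thesis
      unfolding slice_induced_slice_pt[OF slice_induced_pow[OF n f] w] slice_value_eq
      by (simp add: clifford_exp_term_def Re_Im cl_add_def cl_mult_def add_divide_distrib sum_divide_distrib
          if_distrib[of "\<lambda>x::real. x / fact k"] cong: if_cong)
  qed
  then have "(\<lambda>k. star_pow n f k (slice_pt u w v) C / fact k) sums slice_value n (\<lambda>z. clifford_exp n (F z)) u w v C" for C
    unfolding slice_value_eq using sums_slice_combination[OF sums_clifford_exp] by simp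
  then show "star_exp n f (slice_pt u w v) = slice_value n (\<lambda>z. clifford_exp n (F z)) u w v"
    unfolding star_exp_def by (simp add: sums_iff)
qed

lemma paravector_eq_slice_pt:
  assumes n: "1 \<le> n" and x: "x \<in> paravectors n"
  obtains u w v where "w \<in> cl_sphere n" "x = slice_pt u w v"
proof -
  define r where "r = sqrt (\<Sum>i=1..n. (x {i})\<^sup>2)"
  have r2: "r\<^sup>2 = (\<Sum>i=1..n. (x {i})\<^sup>2)"
    unfolding r_def by (simp add: sum_nonneg)
  have x_out: "x C = 0" if "C \<noteq> {}" "\<not> (\<exists>i\<in>{1..n}. C = {i})" for C
    using x that unfolding paravectors_def by auto
  show ?thesis
  proof (cases "r = 0")
    case True
    txt \<open>A real point lies on every slice; any unit vector will do.\<close>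
    then have "x {i} = 0" if "i \<in> {1..n}" for i
      using r2 sum_nonneg_eq_0_iff[of "{1..n}" "\<lambda>i. (x {i})\<^sup>2"] that by auto
    then have "x C = 0" if "C \<noteq> {}" for C
      using x_out[OF that] by blast
    then have "x = slice_pt (x {}) cl_e1 0"
      unfolding slice_pt_def cl_add_def cl_real_def cl_scale_def by (auto simp: fun_eq_iff)
    with cl_e1_in_sphere[OF n] show ?thesis by (rule that)
  next
    case False
    define w where "w = (\<lambda>C. if \<exists>i\<in>{1..n}. C = {i} then x C / r else 0)"
    have "(\<Sum>i=1..n. (w {i})\<^sup>2) = (\<Sum>i=1..n. (x {i})\<^sup>2) / r\<^sup>2"
      unfolding w_def by (simp add: power_divide sum_divide_distrib)
    also have "\<dots> = 1"
      using False r2 by (metis divide_self power_not_zero)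
    finally have "w \<in> cl_sphere n"
      unfolding cl_sphere_def by (auto simp: w_def)
    moreover have "x = slice_pt (x {}) w r"
      unfolding slice_pt_def cl_add_def cl_real_def cl_scale_def w_def using x_out False
      by (auto simp: fun_eq_iff)
    ultimately show ?thesis by (rule that)
  qed
qed

lemma slice_pt_in_paravectors: "w \<in> cl_sphere n \<Longrightarrow> slice_pt u w v \<in> paravectors n"
  unfolding paravectors_def slice_pt_def cl_add_def cl_real_def cl_scale_def cl_sphere_def by auto

lemma slice_induced_unique:
  assumes n: "1 \<le> n" and f: "slice_induced n f F" and g: "slice_induced n g G"
    and eq: "\<forall>x\<in>paravectors n. f x = g x"
  shows "F = G"
proof -
  have "stems_of n g (stem_re F) (stem_im F)"
    using f eq slice_pt_in_paravectors unfolding slice_induced_def stems_of_def by metis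
  then have "stem_re F = stem_re G \<and> stem_im F = stem_im G"
    using g n stems_of_unique unfolding slice_induced_def by blast
  then have "Re (F z C) = Re (G z C) \<and> Im (F z C) = Im (G z C)" for z C
    unfolding stem_re_def stem_im_def by (metis complex.collapse fst_conv snd_conv)
  then show ?thesis
    by (auto simp: fun_eq_iff complex_eq_iff)
qed

theorem mainTheorem2:
  fixes n :: nat and f g :: "cl \<Rightarrow> cl"
  assumes "n \<ge> 1"
    and "slice_monogenic n f" and "slice_monogenic n g"
    and "\<forall>x\<in>paravectors n. star n f g x = star n g f x"
  shows "\<forall>x\<in>paravectors n.
           star_exp n (\<lambda>y. cl_add (f y) (g y)) x = star n (star_exp n f) (star_exp n g) x"
proof
  fix x assume x: "x \<in> paravectors n"
  obtain F G where f: "slice_induced n f F" and g: "slice_induced n g G"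
    using slice_monogenic_induced assms(2,3) by blast
  have supp: "cl_supported n (F z)" "cl_supported n (G z)" for z
    using f g unfolding slice_induced_def intrinsic_holomorphic_def by auto
  have "(\<lambda>z. clifford_mult n (F z) (G z)) = (\<lambda>z. clifford_mult n (G z) (F z))"
    using slice_induced_unique[OF assms(1) slice_induced_star[OF assms(1) f g] slice_induced_star[OF assms(1) g f] assms(4)] .
  then have exp_add: "clifford_exp n (\<lambda>C. F z C + G z C) = clifford_mult n (clifford_exp n (F z)) (clifford_exp n (G z))" for z
    using clifford_exp_add[OF supp] by metis
  obtain u w v where w: "w \<in> cl_sphere n" and x_eq: "x = slice_pt u w v"
    using paravector_eq_slice_pt[OF assms(1) x] .
  have "star_exp n (\<lambda>y. cl_add (f y) (g y)) x = slice_value n (\<lambda>z. clifford_exp n (\<lambda>C. F z C + G z C)) u w v"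
    unfolding x_eq by (rule slice_induced_slice_pt[OF slice_induced_exp[OF assms(1) slice_induced_add[OF f g]] w])
  also have "\<dots> = star n (star_exp n f) (star_exp n g) x"
    unfolding x_eq exp_add
    by (rule slice_induced_slice_pt[OF slice_induced_star[OF assms(1)
          slice_induced_exp[OF assms(1) f] slice_induced_exp[OF assms(1) g]] w, symmetric])
  finally show "star_exp n (\<lambda>y. cl_add (f y) (g y)) x = star n (star_exp n f) (star_exp n g) x" .
qed

end
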